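(* Let $M\in\mathbb{R}^{n_1\times n_2}$ have rank $r$ with compact singular value decomposition $M=U\Sigma V^*$, where $U\in\mathbb{R}^{n_1\times r}$, $V\in\mathbb{R}^{n_2\times r}$ have orthonormal columns and $\Sigma$ is diagonal with positive diagonal entries. Let $\Omega\subsetneq[n_1]\times[n_2]$ and $\tau>0$. Assume there is a matrix $Y\in\mathbb{R}^{n_1\times n_2}$ such that (a) $Y=\mathcal{P}_\Omega Y$, (b) $\mathcal{P}_{\mathrm{T}}Y=\frac{1}{\tau}M+UV^*$, (c) $\|\mathcal{P}_{\mathrm{T}^\perp}Y\|\le 1$. Then $M$ is the unique solution of $$\min_{X\in\mathbb{R}^{n_1\times n_2}}\ \|X\|_*+\frac{1}{2\tau}\|X\|_F^2\quad\text{subject to}\quad \mathcal{P}_\Omega X=\mathcal{P}_\Omega M.$$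
   Context: $[n]=\{1,\dots,n\}$. $\mathcal{P}_\Omega$ is the linear map on $\mathbb{R}^{n_1\times n_2}$ keeping the entries indexed by $\Omega$ and setting all others to zero. $\mathrm{T}=\{UX_1^*+X_2V^*: X_1\in\mathbb{R}^{n_2\times r},X_2\in\mathbb{R}^{n_1\times r}\}$, $\mathrm{T}^\perp$ its orthogonal complement with respect to the trace inner product $\langle X,Y\rangle=\mathrm{trace}(X^*Y)$, and $\mathcal{P}_{\mathrm{T}},\mathcal{P}_{\mathrm{T}^\perp}$ the orthogonal projections; explicitly $\mathcal{P}_{\mathrm{T}}Y=UU^*Y+YVV^*-UU^*YVV^*$. $\|\cdot\|$ is the spectral norm, $\|\cdot\|_*$ the nuclear norm (sum of singular values), $\|\cdot\|_F$ the Frobenius norm. *)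

theory Defs
  imports "HOL-Analysis.Analysis"
begin

text \<open>Matrices are real^'n^'m (m rows, n columns); index types are finite.\<close>

definition P_Omega :: "('m \<times> 'n) set \<Rightarrow> real^'n^'m \<Rightarrow> real^'n^'m" where
  "P_Omega \<Omega> X = (\<chi> i j. if (i, j) \<in> \<Omega> then X $ i $ j else 0)"

definition P_T :: "real^'r^'m \<Rightarrow> real^'r^'n \<Rightarrow> real^'n^'m \<Rightarrow> real^'n^'m" where
  "P_T U V Y = U ** transpose U ** Y + Y ** V ** transpose V
              - U ** transpose U ** Y ** V ** transpose V"

definition P_Tperp :: "real^'r^'m \<Rightarrow> real^'r^'n \<Rightarrow> real^'n^'m \<Rightarrow> real^'n^'m" where
  "P_Tperp U V Y = Y - P_T U V Y"

definition spectral_norm :: "real^'n^'m \<Rightarrow> real" where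
  "spectral_norm A = onorm (\<lambda>x. A *v x)"

definition frob_norm :: "real^'n^'m \<Rightarrow> real" where
  "frob_norm A = sqrt (\<Sum>i\<in>UNIV. \<Sum>j\<in>UNIV. (A $ i $ j)^2)"

definition psd_sqrt :: "real^'n^'n \<Rightarrow> real^'n^'n" where
  "psd_sqrt A = (THE S. transpose S = S \<and> (\<forall>x. 0 \<le> x \<bullet> (S *v x)) \<and> S ** S = A)"

text \<open>Nuclear norm = sum of singular values = trace of (A^T A)^(1/2).\<close>
definition nuclear_norm :: "real^'n^'m \<Rightarrow> real" where
  "nuclear_norm A = trace (psd_sqrt (transpose A ** A))"

end

theory Submission
  imports Defs
begin

text \<open>
  Put \<open>W = P\<^sub>T\<^sub>\<bottom> Y\<close> and \<open>Z = U V\<^sup>T + W\<close>. Since \<open>U\<^sup>T W = 0\<close>, \<open>W V = 0\<close> and \<open>\<parallel>W\<parallel> \<le> 1\<close>,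
  \<open>Z\<close> is a contraction, so \<open>\<langle>Z, X\<rangle> \<le> \<parallel>X\<parallel>\<^sub>*\<close> for every \<open>X\<close> (evaluate the trace in an eigenbasis
  of \<open>X\<^sup>T X\<close>), while \<open>\<langle>Z, M\<rangle> = trace \<Sigma> = \<parallel>M\<parallel>\<^sub>*\<close>. Condition (b) reads \<open>Y = Z + M/\<tau>\<close>, and (a)
  makes \<open>Y\<close> orthogonal to \<open>H = X - M\<close> for every feasible \<open>X\<close>. Expanding the objective at
  \<open>X = M + H\<close> then gives
  \<open>\<parallel>X\<parallel>\<^sub>* + \<parallel>X\<parallel>\<^sub>F\<^sup>2/(2\<tau>) \<ge> \<parallel>M\<parallel>\<^sub>* + \<parallel>M\<parallel>\<^sub>F\<^sup>2/(2\<tau>) + \<langle>Y, H\<rangle> + \<parallel>H\<parallel>\<^sub>F\<^sup>2/(2\<tau>)\<close>,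
  which is strict for \<open>H \<noteq> 0\<close>.
\<close>

declare transpose_matrix_vector [simp del]

lemma inner_matrix_vector_transpose:
  "((A::real^'n^'m) *v x) \<bullet> y = x \<bullet> (transpose A *v y)"
  by (metis dot_lmul_matrix inner_commute transpose_matrix_vector)

lemma symmetric_matrix_inner:
  "transpose (A::real^'n^'n) = A \<Longrightarrow> (A *v x) \<bullet> y = x \<bullet> (A *v y)"
  by (simp add: inner_matrix_vector_transpose)

section \<open>Orthonormal bases\<close>

definition orthonormal_basis :: "(real^'n) set \<Rightarrow> bool" where
  "orthonormal_basis B \<longleftrightarrow> finite B \<and> (\<forall>b\<in>B. norm b = 1) \<and> pairwise orthogonal B \<and> span B = UNIV"

lemma inner_sum_orthonormal_basis:
  assumes "orthonormal_basis B" "b \<in> B"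
  shows "b \<bullet> (\<Sum>c\<in>B. u c *\<^sub>R c) = u b"
proof -
  have "b \<bullet> (\<Sum>c\<in>B. u c *\<^sub>R c) = (\<Sum>c\<in>B. if c = b then u b else 0)"
    unfolding inner_sum_right
  proof (rule sum.cong)
    fix c assume "c \<in> B"
    with assms show "b \<bullet> u c *\<^sub>R c = (if c = b then u b else 0)"
      by (auto simp: orthonormal_basis_def pairwise_def orthogonal_def norm_eq_1)
  qed simp
  also have "\<dots> = u b" using assms by (simp add: orthonormal_basis_def)
  finally show ?thesis .
qed

lemma orthonormal_basis_vector_eqI:
  assumes "orthonormal_basis B" "\<And>b. b \<in> B \<Longrightarrow> b \<bullet> x = b \<bullet> y"
  shows "x = y"
  using assms by (intro vector_eq_dot_span[of x B]) (auto simp: orthonormal_basis_def)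

lemma orthonormal_basis_sum_components:
  assumes "orthonormal_basis B"
  shows "(\<Sum>b\<in>B. b$j * b$k) = (if j = k then 1 else 0)"
proof -
  have "(\<Sum>b\<in>B. (axis k 1 \<bullet> b) *\<^sub>R b) = axis k (1::real)"
    using assms by (intro orthonormal_basis_expand) (auto simp: orthonormal_basis_def)
  hence "(\<Sum>b\<in>B. (axis k 1 \<bullet> b) *\<^sub>R b) $ j = axis k (1::real) $ j" by simp
  moreover have "(\<Sum>b\<in>B. (axis k 1 \<bullet> b) *\<^sub>R b) $ j = (\<Sum>b\<in>B. b$j * b$k)"
    by (simp add: sum_component inner_axis' mult.commute)
  ultimately show ?thesis by (simp add: axis_def)
qed

lemma trace_eq_sum_orthonormal_basis:
  assumes "orthonormal_basis B"
  shows "trace C = (\<Sum>b\<in>B. b \<bullet> (C *v b))"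
proof -
  have "(\<Sum>b\<in>B. b \<bullet> (C *v b)) = (\<Sum>b\<in>B. \<Sum>i\<in>UNIV. \<Sum>j\<in>UNIV. C$i$j * (b$i * b$j))"
    by (simp add: inner_vec_def matrix_vector_mult_def sum_distrib_left mult_ac)
  also have "\<dots> = (\<Sum>i\<in>UNIV. \<Sum>j\<in>UNIV. C$i$j * (\<Sum>b\<in>B. b$i * b$j))"
    by (subst sum.swap, rule sum.cong[OF refl], subst sum.swap) (simp add: sum_distrib_left)
  also have "\<dots> = trace C"
    by (simp add: orthonormal_basis_sum_components[OF assms] trace_def if_distrib cong: if_cong)
  finally show ?thesis by simp
qed

section \<open>Spectral theorem for symmetric matrices\<close>

lemma quadratic_nonpos_imp_linear_coeff_eq_0:
  fixes c d :: real
  assumes "\<And>t. 2 * t * c + t^2 * d \<le> 0"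
  shows "c = 0"
proof (rule ccontr)
  assume "c \<noteq> 0"
  define e where "e = \<bar>d\<bar> + 1"
  have e: "e > 0" "2 * e + d > 0" by (auto simp: e_def)
  have "(2 * (c / e) * c + (c / e)^2 * d) * e^2 \<le> 0"
    using assms[of "c / e"] by (simp add: mult_nonpos_nonneg)
  also have "(2 * (c / e) * c + (c / e)^2 * d) * e^2 = c^2 * (2 * e + d)"
    using e by (simp add: field_simps power2_eq_square)
  finally have "c^2 * (2 * e + d) \<le> 0" .
  with e \<open>c \<noteq> 0\<close> show False by (simp add: mult_le_0_iff)
qed

text \<open>At a maximiser of the Rayleigh quotient the first variation along every direction
  perpendicular to \<open>x\<close> vanishes.\<close>

lemma rayleigh_maximizer_is_eigenvector:
  fixes A :: "real^'n^'n"
  assumes A: "transpose A = A"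
    and W: "subspace W" "\<And>v. v \<in> W \<Longrightarrow> A *v v \<in> W"
    and x: "x \<in> W" "x \<bullet> x = 1"
    and max: "\<And>v. v \<in> W \<Longrightarrow> v \<bullet> (A *v v) \<le> (x \<bullet> (A *v x)) * (v \<bullet> v)"
  shows "A *v x = (x \<bullet> (A *v x)) *\<^sub>R x"
proof -
  define l where "l = x \<bullet> (A *v x)"
  have perp: "y \<bullet> (A *v x) = 0" if y: "y \<in> W" "y \<bullet> x = 0" for y
  proof (rule quadratic_nonpos_imp_linear_coeff_eq_0)
    fix t :: real
    have "x + t *\<^sub>R y \<in> W" using x y W by (simp add: subspace_add subspace_mul)
    from max[OF this] have
      "(x + t *\<^sub>R y) \<bullet> (A *v (x + t *\<^sub>R y)) \<le> l * ((x + t *\<^sub>R y) \<bullet> (x + t *\<^sub>R y))"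
      by (simp add: l_def)
    moreover have "x \<bullet> (A *v y) = y \<bullet> (A *v x)"
      using symmetric_matrix_inner[OF A, of x y] by (simp add: inner_commute)
    ultimately show "2 * t * (y \<bullet> (A *v x)) + t^2 * (y \<bullet> (A *v y) - l * (y \<bullet> y)) \<le> 0"
      using x(2) y(2)
      by (simp add: matrix_vector_right_distrib matrix_vector_mult_scaleR inner_add_left
          inner_add_right inner_commute l_def algebra_simps power2_eq_square)
  qed
  define y where "y = A *v x - l *\<^sub>R x"
  have "y \<in> W" using W x by (simp add: y_def subspace_diff subspace_mul)
  moreover have yx: "y \<bullet> x = 0"
    using x(2) by (simp add: y_def inner_diff_left inner_diff_right l_def inner_commute)
  ultimately have "y \<bullet> (A *v x) = 0" by (rule perp)
  hence "y \<bullet> y = 0" using yx by (simp add: y_def inner_diff_right)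
  thus ?thesis by (simp add: y_def l_def)
qed

lemma rayleigh_maximizer_exists:
  fixes A :: "real^'n^'n"
  assumes W: "subspace W" and w: "w \<in> W" "w \<noteq> 0"
  obtains x where "x \<in> W" "x \<bullet> x = 1"
    "\<And>v. v \<in> W \<Longrightarrow> v \<bullet> (A *v v) \<le> (x \<bullet> (A *v x)) * (v \<bullet> v)"
proof -
  define K where "K = W \<inter> sphere 0 1"
  have "compact K" unfolding K_def by (simp add: closed_subspace closed_Int_compact W)
  moreover have "(1 / norm w) *\<^sub>R w \<in> K" using w W by (simp add: K_def subspace_mul)
  moreover have "continuous_on K (\<lambda>x. x \<bullet> (A *v x))"
    by (intro continuous_intros linear_continuous_on bounded_linear.linear) simp
  ultimately obtain x where xK: "x \<in> K" and xmax: "\<And>y. y \<in> K \<Longrightarrow> y \<bullet> (A *v y) \<le> x \<bullet> (A *v x)"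
    using continuous_attains_sup[of K "\<lambda>x. x \<bullet> (A *v x)"] by blast
  have "v \<bullet> (A *v v) \<le> (x \<bullet> (A *v x)) * (v \<bullet> v)" if v: "v \<in> W" for v
  proof (cases "v = 0")
    case False
    have "(1 / norm v) *\<^sub>R v \<in> K" using v False W by (simp add: K_def subspace_mul)
    from xmax[OF this] have "(v \<bullet> (A *v v)) / (norm v)^2 \<le> x \<bullet> (A *v x)"
      by (simp add: matrix_vector_mult_scaleR power2_eq_square)
    thus ?thesis using False by (simp add: divide_le_eq power2_norm_eq_inner)
  qed simp
  moreover have "x \<in> W" "x \<bullet> x = 1" using xK by (auto simp: K_def norm_eq_1)
  ultimately show ?thesis using that by blast
qed

lemma span_insert_orthogonal_complement:
  assumes W: "subspace W" and x: "x \<in> W" "x \<bullet> x = 1"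
    and B: "{y \<in> W. y \<bullet> x = 0} \<subseteq> span B"
  shows "W \<subseteq> span (insert x B)"
proof
  fix v assume v: "v \<in> W"
  have "v - (v \<bullet> x) *\<^sub>R x \<in> span B"
    using v x W B by (auto simp: subspace_diff subspace_mul inner_diff_left)
  hence "(v - (v \<bullet> x) *\<^sub>R x) + (v \<bullet> x) *\<^sub>R x \<in> span (insert x B)"
    by (intro span_add span_mul) (auto intro: span_base span_mono[THEN subsetD, of B])
  thus "v \<in> span (insert x B)" by simp
qed

lemma invariant_subspace_orthonormal_eigenvectors:
  fixes A :: "real^'n^'n"
  assumes A: "transpose A = A"
  shows "subspace W \<Longrightarrow> (\<And>v. v \<in> W \<Longrightarrow> A *v v \<in> W) \<Longrightarrow>
    \<exists>B\<subseteq>W. (\<forall>b\<in>B. norm b = 1 \<and> A *v b = (b \<bullet> (A *v b)) *\<^sub>R b)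
       \<and> pairwise orthogonal B \<and> W \<subseteq> span B"
proof (induction "dim W" arbitrary: W rule: less_induct)
  case less
  show ?case
  proof (cases "W \<subseteq> {0}")
    case True
    then show ?thesis by (intro exI[of _ "{}"]) auto
  next
    case False
    then obtain w where w: "w \<in> W" "w \<noteq> 0" by auto
    obtain x where x: "x \<in> W" "x \<bullet> x = 1"
      and "\<And>v. v \<in> W \<Longrightarrow> v \<bullet> (A *v v) \<le> (x \<bullet> (A *v x)) * (v \<bullet> v)"
      using rayleigh_maximizer_exists[OF less.prems(1) w, of A] by blast
    with A less.prems have eig: "A *v x = (x \<bullet> (A *v x)) *\<^sub>R x"
      by (rule rayleigh_maximizer_is_eigenvector)
    define W' where "W' = {y \<in> W. y \<bullet> x = 0}"
    have sW': "subspace W'" using less.prems(1) unfolding W'_def subspace_def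
      by (auto simp: inner_add_left)
    have iW': "A *v y \<in> W'" if y: "y \<in> W'" for y
    proof -
      have "(A *v y) \<bullet> x = y \<bullet> (A *v x)" by (rule symmetric_matrix_inner[OF A])
      also have "\<dots> = 0" using y by (subst eig) (simp add: W'_def)
      finally show ?thesis using y less.prems(2) by (simp add: W'_def)
    qed
    have "W' \<subset> W" using x unfolding W'_def by force
    hence "dim W' < dim W"
      using dim_psubset[of W' W] span_eq_iff[of W'] span_eq_iff[of W] sW' less.prems(1) by metis
    from less.hyps[OF this sW' iW'] obtain B' where B': "B' \<subseteq> W'"
      "\<forall>b\<in>B'. norm b = 1 \<and> A *v b = (b \<bullet> (A *v b)) *\<^sub>R b" "pairwise orthogonal B'" "W' \<subseteq> span B'"
      by blast
    show ?thesis
    proof (intro exI[of _ "insert x B'"] conjI)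
      show "insert x B' \<subseteq> W" using B'(1) x by (auto simp: W'_def)
      show "\<forall>b\<in>insert x B'. norm b = 1 \<and> A *v b = (b \<bullet> (A *v b)) *\<^sub>R b"
        using B'(2) x(2) eig by (auto simp: norm_eq_1)
      show "pairwise orthogonal (insert x B')"
        using B'(1,3) unfolding pairwise_insert
        by (auto simp: W'_def orthogonal_def inner_commute)
      show "W \<subseteq> span (insert x B')"
        using span_insert_orthogonal_complement[OF less.prems(1) x] B'(4) by (simp add: W'_def)
    qed
  qed
qed

lemma symmetric_matrix_orthonormal_eigenbasis:
  fixes A :: "real^'n^'n"
  assumes "transpose A = A"
  obtains B where "orthonormal_basis B" "\<And>b. b \<in> B \<Longrightarrow> A *v b = (b \<bullet> (A *v b)) *\<^sub>R b"
proof -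
  obtain B where B: "\<forall>b\<in>B. norm b = 1 \<and> A *v b = (b \<bullet> (A *v b)) *\<^sub>R b"
       "pairwise orthogonal B" "UNIV \<subseteq> span B"
    using invariant_subspace_orthonormal_eigenvectors[OF assms, of UNIV] by auto
  have "0 \<notin> B" using B(1) by force
  with B(2) have "independent B" by (rule pairwise_orthogonal_independent)
  hence "finite B" by (rule finiteI_independent)
  with B show ?thesis using that by (auto simp: orthonormal_basis_def)
qed

section \<open>Positive semidefinite square roots and the nuclear norm\<close>

definition psd :: "real^'n^'n \<Rightarrow> bool" where
  "psd P \<longleftrightarrow> transpose P = P \<and> (\<forall>x. 0 \<le> x \<bullet> (P *v x))"

lemma psd_square_root_eigenvector:
  assumes P: "psd P" and PP: "P ** P = A" and ev: "A *v v = \<mu> *\<^sub>R v"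
  shows "P *v v = sqrt \<mu> *\<^sub>R v"
proof (cases "v = 0")
  case False
  have sym: "(P *v x) \<bullet> y = x \<bullet> (P *v y)" for x y
    using P by (simp add: psd_def symmetric_matrix_inner)
  have AP: "A *v z = P *v (P *v z)" for z using PP by (simp add: matrix_vector_mul_assoc)
  have "\<mu> * (v \<bullet> v) = (P *v v) \<bullet> (P *v v)" using ev AP[of v] sym[of v "P *v v"] by simp
  hence "\<mu> * (v \<bullet> v) \<ge> 0" by simp
  moreover have "v \<bullet> v > 0" using False by simp
  ultimately have mu: "\<mu> \<ge> 0" by (simp add: zero_le_mult_iff)
  define s where "s = sqrt \<mu>"
  have s: "s \<ge> 0" "s * s = \<mu>" using mu by (auto simp: s_def)
  define w where "w = P *v v - s *\<^sub>R v"
  have "P *v w + s *\<^sub>R w = A *v v - \<mu> *\<^sub>R v"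
    unfolding w_def using AP[of v] s
    by (simp add: matrix_vector_mult_diff_distrib matrix_vector_mult_scaleR algebra_simps)
  hence Pw: "P *v w = - s *\<^sub>R w" using ev by (simp add: eq_neg_iff_add_eq_0)
  have "w = 0"
  proof (cases "s = 0")
    case False
    have "0 \<le> w \<bullet> (P *v w)" using P by (simp add: psd_def)
    with Pw s False have "w \<bullet> w \<le> 0" by (simp add: mult_le_0_iff)
    thus ?thesis by (metis inner_gt_zero_iff not_le)
  next
    case True
    hence "w \<bullet> w = v \<bullet> (A *v v)" using AP[of v] sym[of v "P *v v"] by (simp add: w_def)
    also have "\<dots> = 0" using ev s True by simp
    finally show ?thesis by simp
  qed
  thus ?thesis by (simp add: w_def s_def)
qed simp

text \<open>Any two PSD roots of \<open>A\<close> act as \<open>sqrt \<mu>\<close> on each eigenvector of \<open>A\<close> with eigenvalue \<open>\<mu>\<close>,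
  and these eigenvectors span.\<close>

lemma psd_sqrt_eqI:
  assumes Q: "psd Q" and QQ: "Q ** Q = A"
  shows "psd_sqrt A = Q"
  unfolding psd_sqrt_def
proof (rule the_equality)
  show "transpose Q = Q \<and> (\<forall>x. 0 \<le> x \<bullet> (Q *v x)) \<and> Q ** Q = A"
    using Q QQ by (simp add: psd_def)
next
  fix S assume "transpose S = S \<and> (\<forall>x. 0 \<le> x \<bullet> (S *v x)) \<and> S ** S = A"
  hence S: "psd S" and SS: "S ** S = A" by (auto simp: psd_def)
  have "transpose A = A" using QQ Q by (auto simp: psd_def matrix_transpose_mul)
  then obtain B where B: "orthonormal_basis B"
    and ev: "\<And>b. b \<in> B \<Longrightarrow> A *v b = (b \<bullet> (A *v b)) *\<^sub>R b"
    by (rule symmetric_matrix_orthonormal_eigenbasis) blast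
  show "S = Q"
  proof (subst matrix_eq, intro allI, rule orthonormal_basis_vector_eqI[OF B])
    fix x b assume b: "b \<in> B"
    have "b \<bullet> (S *v x) = (S *v b) \<bullet> x" using S by (simp add: psd_def symmetric_matrix_inner)
    also have "\<dots> = (Q *v b) \<bullet> x"
      using psd_square_root_eigenvector[OF S SS ev[OF b]]
        psd_square_root_eigenvector[OF Q QQ ev[OF b]] by simp
    also have "\<dots> = b \<bullet> (Q *v x)" using Q by (simp add: psd_def symmetric_matrix_inner)
    finally show "b \<bullet> (S *v x) = b \<bullet> (Q *v x)" .
  qed
qed

text \<open>\<open>outer_sum B g\<close> is \<open>\<Sum>\<^sub>b g(b) b b\<^sup>T\<close>, the matrix acting diagonally on \<open>B\<close> with weights \<open>g\<close>.\<close>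

definition outer_sum :: "(real^'n) set \<Rightarrow> (real^'n \<Rightarrow> real) \<Rightarrow> real^'n^'n" where
  "outer_sum B g = (\<chi> i j. \<Sum>b\<in>B. g b * b$i * b$j)"

lemma outer_sum_mult_vector: "outer_sum B g *v x = (\<Sum>b\<in>B. (g b * (b \<bullet> x)) *\<^sub>R b)"
proof -
  have "(outer_sum B g *v x) $ i = (\<Sum>b\<in>B. (g b * (b \<bullet> x)) *\<^sub>R b) $ i" for i
  proof -
    have "(outer_sum B g *v x) $ i = (\<Sum>j\<in>UNIV. \<Sum>b\<in>B. g b * b$i * b$j * x$j)"
      by (simp add: outer_sum_def matrix_vector_mult_def sum_distrib_right)
    also have "\<dots> = (\<Sum>b\<in>B. \<Sum>j\<in>UNIV. g b * b$i * b$j * x$j)" by (rule sum.swap)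
    also have "\<dots> = (\<Sum>b\<in>B. (g b * (b \<bullet> x)) *\<^sub>R b) $ i"
      by (simp add: sum_component inner_vec_def sum_distrib_left sum_distrib_right mult_ac)
    finally show ?thesis .
  qed
  thus ?thesis by (simp add: vec_eq_iff)
qed

lemma transpose_outer_sum: "transpose (outer_sum B g) = outer_sum B g"
  by (simp add: outer_sum_def transpose_def mult_ac)

lemma inner_outer_sum:
  "orthonormal_basis B \<Longrightarrow> b \<in> B \<Longrightarrow> b \<bullet> (outer_sum B g *v x) = g b * (b \<bullet> x)"
  by (simp add: outer_sum_mult_vector inner_sum_orthonormal_basis)

lemma trace_outer_sum: "orthonormal_basis B \<Longrightarrow> trace (outer_sum B g) = (\<Sum>b\<in>B. g b)"
  by (simp add: trace_eq_sum_orthonormal_basis inner_outer_sum orthonormal_basis_def norm_eq_1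
      cong: sum.cong)

lemma psd_outer_sum:
  assumes "\<And>b. b \<in> B \<Longrightarrow> 0 \<le> g b"
  shows "psd (outer_sum B g)"
proof -
  have "x \<bullet> (outer_sum B g *v x) = (\<Sum>b\<in>B. g b * (b \<bullet> x)\<^sup>2)" for x
    by (simp add: outer_sum_mult_vector inner_sum_right inner_commute power2_eq_square mult_ac)
  thus ?thesis using assms by (simp add: psd_def transpose_outer_sum sum_nonneg)
qed

lemma outer_sum_mult_outer_sum:
  assumes "orthonormal_basis B"
  shows "outer_sum B g ** outer_sum B h = outer_sum B (\<lambda>b. g b * h b)"
  using assms
  by (subst matrix_eq, intro allI, intro orthonormal_basis_vector_eqI[OF assms])
     (simp add: matrix_vector_mul_assoc[symmetric] inner_outer_sum)

lemma symmetric_matrix_eq_outer_sum: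
  assumes A: "transpose A = A" and B: "orthonormal_basis B"
    and ev: "\<And>b. b \<in> B \<Longrightarrow> A *v b = (b \<bullet> (A *v b)) *\<^sub>R b"
  shows "A = outer_sum B (\<lambda>b. b \<bullet> (A *v b))"
proof (subst matrix_eq, intro allI, rule orthonormal_basis_vector_eqI[OF B])
  fix x b assume b: "b \<in> B"
  have "b \<bullet> (A *v x) = (A *v b) \<bullet> x" using A by (simp add: symmetric_matrix_inner)
  also have "\<dots> = (b \<bullet> (A *v b)) * (b \<bullet> x)" by (subst ev[OF b]) simp
  finally show "b \<bullet> (A *v x) = b \<bullet> (outer_sum B (\<lambda>b. b \<bullet> (A *v b)) *v x)"
    using B b by (simp add: inner_outer_sum)
qed

lemma nuclear_norm_eq_sum_eigenbasis:
  fixes X :: "real^'n^'m"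
  assumes B: "orthonormal_basis B"
    and ev: "\<And>b. b \<in> B \<Longrightarrow> (transpose X ** X) *v b = (b \<bullet> ((transpose X ** X) *v b)) *\<^sub>R b"
  shows "nuclear_norm X = (\<Sum>b\<in>B. norm (X *v b))"
proof -
  define P where "P = outer_sum B (\<lambda>b. norm (X *v b))"
  have gram: "b \<bullet> ((transpose X ** X) *v b) = norm (X *v b) * norm (X *v b)" for b
    using power2_norm_eq_inner[of "X *v b"]
    by (simp add: matrix_vector_mul_assoc[symmetric] inner_matrix_vector_transpose power2_eq_square)
  have "P ** P = outer_sum B (\<lambda>b. b \<bullet> ((transpose X ** X) *v b))"
    by (simp add: P_def outer_sum_mult_outer_sum[OF B] gram)
  also have "\<dots> = transpose X ** X"
    by (rule symmetric_matrix_eq_outer_sum[symmetric, OF _ B ev]) (simp add: matrix_transpose_mul)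
  finally have "psd_sqrt (transpose X ** X) = P"
    by (intro psd_sqrt_eqI) (simp_all add: P_def psd_outer_sum)
  thus ?thesis by (simp add: nuclear_norm_def P_def trace_outer_sum[OF B])
qed

section \<open>The Frobenius inner product and nuclear norm duality\<close>

definition frob_inner :: "real^'n^'m \<Rightarrow> real^'n^'m \<Rightarrow> real" where
  "frob_inner A B = (\<Sum>i\<in>UNIV. \<Sum>j\<in>UNIV. A$i$j * B$i$j)"

lemma frob_inner_eq_trace: "frob_inner A B = trace (transpose A ** B)"
proof -
  have "trace (transpose A ** B) = (\<Sum>j\<in>UNIV. \<Sum>i\<in>UNIV. A$i$j * B$i$j)"
    by (simp add: trace_def matrix_matrix_mult_def transpose_def)
  thus ?thesis unfolding frob_inner_def by (subst sum.swap) simp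
qed

lemma frob_inner_add_left: "frob_inner (A + B) C = frob_inner A C + frob_inner B C"
  by (simp add: frob_inner_def algebra_simps sum.distrib)

lemma frob_inner_add_right: "frob_inner A (B + C) = frob_inner A B + frob_inner A C"
  by (simp add: frob_inner_def algebra_simps sum.distrib)

lemma frob_inner_scaleR_left: "frob_inner (c *\<^sub>R A) B = c * frob_inner A B"
  by (simp add: frob_inner_def sum_distrib_left mult_ac)

lemma frob_inner_commute: "frob_inner A B = frob_inner B A"
  by (simp add: frob_inner_def mult_ac)

lemma power2_frob_norm: "(frob_norm A)\<^sup>2 = frob_inner A A"
  by (simp add: frob_norm_def frob_inner_def power2_eq_square sum_nonneg)

lemma frob_inner_self_pos:
  assumes "H \<noteq> 0"
  shows "frob_inner H H > 0"
proof -
  from assms obtain i j where ij: "H $ i $ j \<noteq> 0" by (metis vec_eq_iff zero_index)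
  have "0 < (\<Sum>j'\<in>UNIV. H $ i $ j' * H $ i $ j')"
    by (rule sum_pos2[of UNIV j]) (use ij in \<open>auto simp: zero_less_mult_iff linorder_neq_iff\<close>)
  hence "0 < (\<Sum>i'\<in>UNIV. \<Sum>j'\<in>UNIV. H $ i' $ j' * H $ i' $ j')"
    by (intro sum_pos2[of UNIV i]) (auto intro: sum_nonneg)
  thus ?thesis by (simp add: frob_inner_def)
qed

lemma frob_inner_le_nuclear_norm:
  fixes Z X :: "real^'n^'m"
  assumes Z: "\<And>x. norm (Z *v x) \<le> norm x"
  shows "frob_inner Z X \<le> nuclear_norm X"
proof -
  have "transpose (transpose X ** X) = transpose X ** X" by (simp add: matrix_transpose_mul)
  then obtain B where B: "orthonormal_basis B"
    and ev: "\<And>b. b \<in> B \<Longrightarrow> (transpose X ** X) *v b = (b \<bullet> ((transpose X ** X) *v b)) *\<^sub>R b"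
    by (rule symmetric_matrix_orthonormal_eigenbasis) blast
  have "frob_inner Z X = (\<Sum>b\<in>B. (Z *v b) \<bullet> (X *v b))"
    unfolding frob_inner_eq_trace trace_eq_sum_orthonormal_basis[OF B]
    by (simp add: inner_matrix_vector_transpose matrix_vector_mul_assoc[symmetric])
  also have "\<dots> \<le> (\<Sum>b\<in>B. norm (X *v b))"
  proof (rule sum_mono)
    fix b assume "b \<in> B"
    hence "norm (Z *v b) \<le> 1" using Z[of b] B by (simp add: orthonormal_basis_def)
    hence "norm (Z *v b) * norm (X *v b) \<le> norm (X *v b)"
      by (simp add: mult_left_le_one_le)
    thus "(Z *v b) \<bullet> (X *v b) \<le> norm (X *v b)"
      using norm_cauchy_schwarz[of "Z *v b" "X *v b"] by linarith
  qed
  also have "\<dots> = nuclear_norm X" by (rule nuclear_norm_eq_sum_eigenbasis[OF B ev, symmetric])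
  finally show ?thesis .
qed

section \<open>Compact singular value decompositions\<close>

lemma psd_diagonal:
  assumes "\<And>i j. i \<noteq> j \<Longrightarrow> S $ i $ j = 0" and "\<And>i. 0 \<le> S $ i $ i"
  shows "psd S"
proof -
  have Sx: "(S *v x) $ i = S $ i $ i * x $ i" for x i
  proof -
    have "(S *v x) $ i = (\<Sum>j\<in>UNIV. S $ i $ j * x $ j)" by (simp add: matrix_vector_mult_def)
    also have "\<dots> = (\<Sum>j\<in>UNIV. if j = i then S $ i $ i * x $ i else 0)"
      by (rule sum.cong) (use assms(1) in auto)
    finally show ?thesis by simp
  qed
  have "x \<bullet> (S *v x) = (\<Sum>i\<in>UNIV. S $ i $ i * (x $ i)\<^sup>2)" for x
    by (simp add: inner_vec_def Sx power2_eq_square mult_ac)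
  moreover have "transpose S = S"
    using assms(1) by (simp add: transpose_def vec_eq_iff) (metis)
  ultimately show ?thesis using assms(2) by (simp add: psd_def sum_nonneg)
qed

lemma psd_congruence:
  fixes S :: "real^'r^'r" and V :: "real^'r^'n"
  assumes "psd S"
  shows "psd (V ** S ** transpose V)"
proof -
  have "x \<bullet> ((V ** S ** transpose V) *v x) = (transpose V *v x) \<bullet> (S *v (transpose V *v x))" for x
    by (simp add: matrix_vector_mul_assoc[symmetric] inner_matrix_vector_transpose)
  thus ?thesis using assms by (simp add: psd_def matrix_transpose_mul matrix_mul_assoc)
qed

lemma trace_congruence_orthonormal_columns:
  fixes S :: "real^'r^'r" and V :: "real^'r^'n"
  assumes "transpose V ** V = mat 1"
  shows "trace (V ** S ** transpose V) = trace S"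
  using trace_mul_sym[of "V ** S" "transpose V"] assms by (simp add: matrix_mul_assoc)

lemma nuclear_norm_svd:
  fixes U :: "real^'r^'m" and V :: "real^'r^'n" and S :: "real^'r^'r"
  assumes U: "transpose U ** U = mat 1" and V: "transpose V ** V = mat 1" and S: "psd S"
  shows "nuclear_norm (U ** S ** transpose V) = trace S"
proof -
  have VV: "A ** transpose V ** V = A" for A :: "real^'r^'n"
    using V by (simp add: matrix_mul_assoc[symmetric])
  have UU: "A ** transpose U ** U = A" for A :: "real^'r^'n"
    using U by (simp add: matrix_mul_assoc[symmetric])
  have "transpose S = S" using S by (simp add: psd_def)
  hence "(V ** S ** transpose V) ** (V ** S ** transpose V)
      = transpose (U ** S ** transpose V) ** (U ** S ** transpose V)"
    by (simp add: matrix_transpose_mul matrix_mul_assoc VV UU)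
  hence "psd_sqrt (transpose (U ** S ** transpose V) ** (U ** S ** transpose V)) = V ** S ** transpose V"
    by (intro psd_sqrt_eqI psd_congruence S)
  thus ?thesis by (simp add: nuclear_norm_def trace_congruence_orthonormal_columns[OF V])
qed

lemma frob_inner_svd:
  fixes U :: "real^'r^'m" and V :: "real^'r^'n" and S :: "real^'r^'r"
  assumes U: "transpose U ** U = mat 1" and V: "transpose V ** V = mat 1"
  shows "frob_inner (U ** transpose V) (U ** S ** transpose V) = trace S"
proof -
  have "V ** transpose U ** U = V" using U by (simp add: matrix_mul_assoc[symmetric])
  thus ?thesis using trace_congruence_orthonormal_columns[OF V, of S]
    by (simp add: frob_inner_eq_trace matrix_transpose_mul matrix_mul_assoc)
qed

lemma frob_inner_svd_eq_0:
  fixes U :: "real^'r^'m" and V :: "real^'r^'n" and S :: "real^'r^'r" and W :: "real^'n^'m"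
  assumes "\<And>x. transpose U *v (W *v x) = 0"
  shows "frob_inner W (U ** S ** transpose V) = 0"
proof -
  have "transpose U ** W = 0"
    using assms by (subst matrix_eq) (simp add: matrix_vector_mul_assoc[symmetric])
  hence "transpose W ** U = transpose 0"
    by (metis matrix_transpose_mul transpose_transpose)
  hence WU: "transpose W ** U = 0" by (simp add: transpose_def vec_eq_iff)
  have "transpose W ** (U ** S ** transpose V) = (transpose W ** U) ** (S ** transpose V)"
    by (simp add: matrix_mul_assoc)
  also have "\<dots> = 0" by (subst WU) (simp add: matrix_matrix_mult_def vec_eq_iff)
  finally show ?thesis by (simp add: frob_inner_eq_trace trace_def)
qed

section \<open>The dual certificate\<close>

lemma norm_mult_vector_le_spectral_norm: "norm (A *v x) \<le> spectral_norm A * norm x"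
  unfolding spectral_norm_def by (rule onorm) simp

lemma P_Tperp_mult_vector:
  "P_Tperp U V Y *v x = Y *v x - U *v (transpose U *v (Y *v x)) - Y *v (V *v (transpose V *v x))
     + U *v (transpose U *v (Y *v (V *v (transpose V *v x))))"
  by (simp add: P_Tperp_def P_T_def matrix_vector_mult_diff_rdistrib
      matrix_vector_mult_add_rdistrib matrix_vector_mul_assoc[symmetric])

lemma transpose_mult_P_Tperp:
  assumes "transpose U ** U = mat 1"
  shows "transpose U *v (P_Tperp U V Y *v x) = 0"
proof -
  have "transpose U *v (U *v z) = z" for z by (simp add: matrix_vector_mul_assoc assms)
  thus ?thesis
    by (simp add: P_Tperp_mult_vector matrix_vector_mult_diff_distrib matrix_vector_right_distrib)
qed

lemma P_Tperp_mult_orthonormal_columns: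
  assumes "transpose V ** V = mat 1"
  shows "P_Tperp U V Y *v (V *v a) = 0"
proof -
  have "transpose V *v (V *v z) = z" for z by (simp add: matrix_vector_mul_assoc assms)
  thus ?thesis by (simp add: P_Tperp_mult_vector)
qed

text \<open>Split \<open>x = V a + q\<close> with \<open>a = V\<^sup>T x\<close> and \<open>q \<bottom> range V\<close>; then \<open>(U V\<^sup>T + W) x = U a + W q\<close>
  and both splittings are orthogonal, so Pythagoras bounds the norm by \<open>\<parallel>a\<parallel>\<^sup>2 + \<parallel>q\<parallel>\<^sup>2 = \<parallel>x\<parallel>\<^sup>2\<close>.\<close>

lemma norm_mult_vector_orthogonal_sum_le:
  fixes U :: "real^'r^'m" and V :: "real^'r^'n" and W :: "real^'n^'m"
  assumes U: "transpose U ** U = mat 1" and V: "transpose V ** V = mat 1"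
    and UW: "\<And>x. transpose U *v (W *v x) = 0" and WV: "\<And>a. W *v (V *v a) = 0"
    and W: "spectral_norm W \<le> 1"
  shows "norm ((U ** transpose V + W) *v x) \<le> norm x"
proof -
  have UtU: "transpose U *v (U *v z) = z" for z by (simp add: matrix_vector_mul_assoc U)
  have VtV: "transpose V *v (V *v z) = z" for z by (simp add: matrix_vector_mul_assoc V)
  define a where "a = transpose V *v x"
  define q where "q = x - V *v a"
  have Zx: "(U ** transpose V + W) *v x = U *v a + W *v q"
    using WV[of a] by (simp add: q_def a_def matrix_vector_mult_add_rdistrib
        matrix_vector_mult_diff_distrib matrix_vector_mul_assoc[symmetric])
  have "(V *v a) \<bullet> q = 0"
    by (simp add: q_def inner_matrix_vector_transpose matrix_vector_mult_diff_distrib VtV a_def)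
  moreover have "(V *v a) \<bullet> (V *v a) = a \<bullet> a" by (simp add: inner_matrix_vector_transpose VtV)
  moreover have "x = V *v a + q" by (simp add: q_def)
  ultimately have x: "x \<bullet> x = a \<bullet> a + q \<bullet> q"
    by (metis (no_types) inner_add_left inner_add_right inner_commute add_0 add_0_right)
  have "norm (W *v q) \<le> spectral_norm W * norm q" by (rule norm_mult_vector_le_spectral_norm)
  also have "\<dots> \<le> 1 * norm q" using W by (intro mult_right_mono) simp_all
  finally have "(W *v q) \<bullet> (W *v q) \<le> q \<bullet> q" by (simp add: norm_le)
  moreover have "(U *v a) \<bullet> (W *v q) = 0" by (simp add: inner_matrix_vector_transpose UW)
  moreover have "(U *v a) \<bullet> (U *v a) = a \<bullet> a" by (simp add: inner_matrix_vector_transpose UtU)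
  ultimately have "(U *v a + W *v q) \<bullet> (U *v a + W *v q) \<le> x \<bullet> x"
    using x by (simp add: inner_add_left inner_add_right inner_commute)
  thus ?thesis by (simp add: Zx norm_le)
qed

lemma frob_inner_P_Omega_eq_0:
  assumes Y: "Y = P_Omega \<Omega> Y" and X: "P_Omega \<Omega> X = P_Omega \<Omega> M"
  shows "frob_inner Y (X - M) = 0"
proof -
  have "Y $ i $ j * (X - M) $ i $ j = 0" for i j
  proof (cases "(i, j) \<in> \<Omega>")
    case True
    with arg_cong[OF X, of "\<lambda>A. A $ i $ j"] show ?thesis by (simp add: P_Omega_def)
  next
    case False
    with arg_cong[OF Y, of "\<lambda>A. A $ i $ j"] show ?thesis by (simp add: P_Omega_def)
  qed
  thus ?thesis unfolding frob_inner_def by (intro sum.neutral ballI) simp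
qed

text \<open>Here \<open>Z\<close> is a subgradient of the nuclear norm at \<open>M\<close> and \<open>Z + M/\<tau>\<close> one of the objective.\<close>

lemma strict_minimizer_of_subgradient:
  fixes Z M X :: "real^'n^'m"
  assumes Z: "\<And>x. norm (Z *v x) \<le> norm x" and ZM: "frob_inner Z M = nuclear_norm M"
    and \<tau>: "\<tau> > 0" and orth: "frob_inner (Z + (1 / \<tau>) *\<^sub>R M) (X - M) = 0" and XM: "X \<noteq> M"
  shows "nuclear_norm M + 1 / (2 * \<tau>) * (frob_norm M)\<^sup>2
    < nuclear_norm X + 1 / (2 * \<tau>) * (frob_norm X)\<^sup>2"
proof -
  define H where "H = X - M"
  have X: "X = M + H" by (simp add: H_def)
  have "frob_inner H H > 0" using XM by (intro frob_inner_self_pos) (simp add: H_def)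
  moreover have "frob_inner Z H + (1 / \<tau>) * frob_inner M H = 0"
    using orth by (simp add: H_def frob_inner_add_left frob_inner_scaleR_left)
  ultimately have "nuclear_norm M + 1 / (2 * \<tau>) * frob_inner M M
      < nuclear_norm M + 1 / (2 * \<tau>) * frob_inner M M
        + (frob_inner Z H + (1 / \<tau>) * frob_inner M H) + 1 / (2 * \<tau>) * frob_inner H H"
    using \<tau> by simp
  also have "\<dots> = frob_inner Z X + 1 / (2 * \<tau>) * frob_inner X X"
    using \<tau> by (simp add: X ZM frob_inner_add_left frob_inner_add_right frob_inner_commute[of H M]
        field_simps)
  also have "\<dots> \<le> nuclear_norm X + 1 / (2 * \<tau>) * frob_inner X X"
    using frob_inner_le_nuclear_norm[OF Z] by simp
  finally show ?thesis by (simp add: power2_frob_norm)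
qed

theorem theorem3:
  fixes M :: "real^'n2^'n1" and U :: "real^'r^'n1" and V :: "real^'r^'n2"
    and S :: "real^'r^'r" and \<Omega> :: "('n1 \<times> 'n2) set" and \<tau> :: real
    and Y :: "real^'n2^'n1"
  assumes rank_M: "rank M = CARD('r)"
    and svd: "M = U ** S ** transpose V"
    and U_orth: "transpose U ** U = mat 1"
    and V_orth: "transpose V ** V = mat 1"
    and S_diag: "\<And>i j. i \<noteq> j \<Longrightarrow> S $ i $ j = 0"
    and S_pos: "\<And>i. S $ i $ i > 0"
    and \<Omega>_proper: "\<Omega> \<noteq> UNIV"
    and \<tau>_pos: "\<tau> > 0"
    and Ya: "Y = P_Omega \<Omega> Y"
    and Yb: "P_T U V Y = (1 / \<tau>) *\<^sub>R M + U ** transpose V"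
    and Yc: "spectral_norm (P_Tperp U V Y) \<le> 1"
  shows "\<forall>X. P_Omega \<Omega> X = P_Omega \<Omega> M \<and> X \<noteq> M \<longrightarrow>
           nuclear_norm M + 1 / (2 * \<tau>) * (frob_norm M)^2
           < nuclear_norm X + 1 / (2 * \<tau>) * (frob_norm X)^2"
proof (intro allI impI, elim conjE)
  fix X assume X: "P_Omega \<Omega> X = P_Omega \<Omega> M" and XM: "X \<noteq> M"
  define Z where "Z = U ** transpose V + P_Tperp U V Y"
  have "psd S" using S_diag S_pos by (intro psd_diagonal less_imp_le)
  have "frob_inner Z M = nuclear_norm M"
    unfolding Z_def svd frob_inner_add_left
    using frob_inner_svd[OF U_orth V_orth] nuclear_norm_svd[OF U_orth V_orth \<open>psd S\<close>]
      frob_inner_svd_eq_0[OF transpose_mult_P_Tperp[OF U_orth]] by simp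
  moreover have "Z + (1 / \<tau>) *\<^sub>R M = Y"
    by (simp add: Z_def P_Tperp_def Yb algebra_simps)
  moreover have "norm (Z *v x) \<le> norm x" for x
    unfolding Z_def using U_orth V_orth transpose_mult_P_Tperp[OF U_orth]
      P_Tperp_mult_orthonormal_columns[OF V_orth] Yc
    by (rule norm_mult_vector_orthogonal_sum_le)
  ultimately show "nuclear_norm M + 1 / (2 * \<tau>) * (frob_norm M)^2
      < nuclear_norm X + 1 / (2 * \<tau>) * (frob_norm X)^2"
    using strict_minimizer_of_subgradient \<tau>_pos frob_inner_P_Omega_eq_0[OF Ya X] XM by metis
qed

end
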